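(* Let $\kappa<0$ and for $\Delta\in\mathbb R$ and $\sigma^*\ge0$ define \[ \hat E(\Delta,\sigma^* )=-\frac1\kappa\ln\left(e^{\kappa\sigma^*}+e^{-\kappa\Delta}\left(1-e^{\kappa\sigma^*}\right)\right). \] Suppose $\sigma^*>0$ is fixed. Then: (1) $\hat E(0,\sigma^* )=0$ and $|\hat E(\Delta,\sigma^* )|$ is increasing in $|\Delta|$ (i.e. increasing in $\Delta$ on $[0,\infty)$ and decreasing in $\Delta$ on $(-\infty,0]$); (2) if $\Delta>0$, then $\hat E(\Delta,\sigma^* )>0$ and \[ 0<|\Delta|\left(1-e^{\kappa\sigma^*}\right)<|\hat E(\Delta,\sigma^* )|<|\Delta|; \] (3) if $\Delta<0$, then $\hat E(\Delta,\sigma^* )<0$ and \[ 0<|\hat E(\Delta,\sigma^* )|<\min\left\{|\Delta|\left(1-e^{\kappa\sigma^*}\right),\ \sigma^*\right\}. \] Suppose instead $\Delta\in\mathbb R$ is fixed. Then: (4) $\hat E(\Delta,0)=0$ and $|\hat E(\Delta,\sigma^* )|$ is increasing in $\sigma^*\ge0$.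
   Context: In the paper's penalized Kolm–Pollak facility location model, $\Delta=\hat{\mathcal K}-\mathcal K^*$ is the signed error of the parameter $\hat{\mathcal K}$ approximating the optimal unpenalized Kolm–Pollak score $\mathcal K^*$, $\sigma^*\ge0$ is the intended penalty of the optimal solution, and $\hat E(\Delta,\sigma^* )$ equals $\hat\sigma-\sigma^*$, the error in the penalty applied; so $\Delta>0$ corresponds to over-penalizing ($\hat\sigma>\sigma^*$) and $\Delta<0$ to under-penalizing ($\hat\sigma<\sigma^*$). *)

theory Defs
  imports Complex_Main
begin

definition Ehat :: "real \<Rightarrow> real \<Rightarrow> real \<Rightarrow> real" where
  "Ehat \<kappa> \<Delta> \<sigma> = - (1 / \<kappa>) * ln (exp (\<kappa> * \<sigma>) + exp (- \<kappa> * \<Delta>) * (1 - exp (\<kappa> * \<sigma>)))"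

end

theory Submission
  imports Defs
begin

text \<open>Put \<open>c = -\<kappa> > 0\<close> and \<open>p = 1 - exp (\<kappa> \<sigma>)\<close>. The argument of the logarithm in \<open>Ehat\<close> is
  \<open>1 - p + p exp (c \<Delta>)\<close>, so \<open>c Ehat\<close> is the cumulant generating function of a Bernoulli(\<open>p\<close>)
  variable, evaluated at \<open>c \<Delta>\<close>. It is strictly increasing and vanishes at \<open>0\<close>; by strict
  convexity of \<open>exp\<close> (Jensen) it lies strictly above the line \<open>p c \<Delta>\<close> through the mean; it is
  below \<open>c \<Delta>\<close> because the variable is at most \<open>1\<close>; it is above \<open>ln (1 - p) = \<kappa> \<sigma>\<close>, the
  contribution of the atom at \<open>0\<close>; and increasing \<open>p\<close>, i.e. \<open>\<sigma>\<close>, moves the argument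
  \<open>1 + p (exp (c \<Delta>) - 1)\<close> further away from \<open>1\<close>.\<close>

lemma exp_gt_tangent:
  fixes m y :: real
  assumes "y \<noteq> m"
  shows "exp m * (1 + (y - m)) < exp y"
proof -
  have "1 + (y - m) < exp (y - m)"
    using exp_minus_greater[of "m - y"] assms by simp
  then have "exp m * (1 + (y - m)) < exp m * exp (y - m)"
    by simp
  then show ?thesis
    by (simp flip: exp_add)
qed

lemma exp_strict_convex:
  fixes t L :: real
  assumes "0 < t" "t < 1" "L \<noteq> 0"
  shows "exp (t * L) < (1 - t) + t * exp L"
proof -
  let ?m = "t * L"
  have at_0: "exp ?m * (1 + (0 - ?m)) < exp 0"
    using assms by (intro exp_gt_tangent) simp
  have at_L: "exp ?m * (1 + (L - ?m)) < exp L"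
    using assms by (intro exp_gt_tangent) simp
  have "(1 - t) * (exp ?m * (1 + (0 - ?m))) + t * (exp ?m * (1 + (L - ?m)))
      < (1 - t) * exp 0 + t * exp L"
    using assms at_0 at_L by (intro add_strict_mono mult_strict_left_mono) auto
  moreover have "(1 - t) * (exp ?m * (1 + (0 - ?m))) + t * (exp ?m * (1 + (L - ?m))) = exp ?m"
    by (simp add: algebra_simps)
  ultimately show ?thesis
    by simp
qed

definition bernoulli_cgf :: "real \<Rightarrow> real \<Rightarrow> real" where
  "bernoulli_cgf p L = ln (1 - p + p * exp L)"

lemma bernoulli_cgf_zero_left [simp]: "bernoulli_cgf 0 L = 0"
  by (simp add: bernoulli_cgf_def)

lemma bernoulli_cgf_zero_right [simp]: "bernoulli_cgf p 0 = 0"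
  by (simp add: bernoulli_cgf_def)

lemma bernoulli_mgf_pos:
  fixes p L :: real
  assumes "0 \<le> p" "p \<le> 1"
  shows "0 < 1 - p + p * exp L"
  using assms by (cases "p = 1") (auto intro: add_pos_nonneg)

lemma bernoulli_cgf_strict_mono:
  assumes "0 < p" "p \<le> 1"
  shows "strict_mono (bernoulli_cgf p)"
proof (rule strict_monoI)
  fix L M :: real
  assume "L < M"
  then have "1 - p + p * exp L < 1 - p + p * exp M"
    using assms by simp
  then show "bernoulli_cgf p L < bernoulli_cgf p M"
    using assms by (simp add: bernoulli_cgf_def bernoulli_mgf_pos)
qed

lemma bernoulli_cgf_gt_mean:
  assumes "0 < p" "p < 1" "L \<noteq> 0"
  shows "p * L < bernoulli_cgf p L"
proof -
  have "exp (p * L) < 1 - p + p * exp L"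
    using exp_strict_convex[OF assms] by simp
  then have "ln (exp (p * L)) < ln (1 - p + p * exp L)"
    by (rule ln_strict_mono) simp
  then show ?thesis
    by (simp add: bernoulli_cgf_def)
qed

lemma bernoulli_cgf_less_self:
  assumes "0 \<le> p" "p < 1" "0 < L"
  shows "bernoulli_cgf p L < L"
proof -
  have "(1 - p) * 1 < (1 - p) * exp L"
    using assms by simp
  then have "1 - p + p * exp L < exp L"
    by (simp add: algebra_simps)
  then have "ln (1 - p + p * exp L) < ln (exp L)"
    using assms by (intro ln_strict_mono bernoulli_mgf_pos) auto
  then show ?thesis
    by (simp add: bernoulli_cgf_def)
qed

lemma bernoulli_cgf_gt_ln:
  assumes "0 < p" "p < 1"
  shows "ln (1 - p) < bernoulli_cgf p L"
  using assms by (simp add: bernoulli_cgf_def bernoulli_mgf_pos)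

lemma bernoulli_cgf_abs_mono:
  assumes "0 \<le> p" "p \<le> q" "q \<le> 1"
  shows "\<bar>bernoulli_cgf p L\<bar> \<le> \<bar>bernoulli_cgf q L\<bar>"
proof -
  have pos: "0 < 1 - p + p * exp L" "0 < 1 - q + q * exp L"
    using assms by (simp_all add: bernoulli_mgf_pos)
  have expand: "1 - r + r * exp L = 1 + r * (exp L - 1)" for r :: real
    by (simp add: algebra_simps)
  show ?thesis
  proof (cases "0 \<le> L")
    case True
    then have "1 \<le> 1 - p + p * exp L" "1 - p + p * exp L \<le> 1 - q + q * exp L"
      using assms unfolding expand by (simp_all add: mult_right_mono)
    then show ?thesis
      using pos by (simp add: bernoulli_cgf_def)
  next
    case False
    then have "1 - p + p * exp L \<le> 1" "1 - q + q * exp L \<le> 1 - p + p * exp L"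
      using assms unfolding expand by (simp_all add: mult_nonneg_nonpos mult_right_mono_neg)
    then show ?thesis
      using pos by (simp add: bernoulli_cgf_def)
  qed
qed

lemma Ehat_eq_bernoulli_cgf:
  "Ehat \<kappa> \<Delta> \<sigma> = bernoulli_cgf (1 - exp (\<kappa> * \<sigma>)) (- \<kappa> * \<Delta>) / - \<kappa>"
  by (simp add: Ehat_def bernoulli_cgf_def algebra_simps)

lemma Ehat_zero_left: "Ehat \<kappa> 0 \<sigma> = 0"
  and Ehat_zero_right: "Ehat \<kappa> \<Delta> 0 = 0"
  by (simp_all add: Ehat_eq_bernoulli_cgf)

lemma Ehat_less_mono:
  assumes "\<kappa> < 0" "0 < \<sigma>" "x < y"
  shows "Ehat \<kappa> x \<sigma> < Ehat \<kappa> y \<sigma>"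
proof -
  have "0 < 1 - exp (\<kappa> * \<sigma>)"
    using assms by (simp add: mult_neg_pos)
  then have "bernoulli_cgf (1 - exp (\<kappa> * \<sigma>)) (- \<kappa> * x)
      < bernoulli_cgf (1 - exp (\<kappa> * \<sigma>)) (- \<kappa> * y)"
    using assms by (intro strict_monoD[OF bernoulli_cgf_strict_mono]) auto
  then show ?thesis
    unfolding Ehat_eq_bernoulli_cgf using assms by (intro divide_strict_right_mono) auto
qed

lemma Ehat_gt_weighted_error:
  assumes "\<kappa> < 0" "0 < \<sigma>" "\<Delta> \<noteq> 0"
  shows "\<Delta> * (1 - exp (\<kappa> * \<sigma>)) < Ehat \<kappa> \<Delta> \<sigma>"
proof -
  have "(1 - exp (\<kappa> * \<sigma>)) * (- \<kappa> * \<Delta>)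
      < bernoulli_cgf (1 - exp (\<kappa> * \<sigma>)) (- \<kappa> * \<Delta>)"
    using assms by (intro bernoulli_cgf_gt_mean) (auto simp: mult_neg_pos)
  then show ?thesis
    unfolding Ehat_eq_bernoulli_cgf using assms by (subst pos_less_divide_eq) (auto simp: algebra_simps)
qed

lemma Ehat_less_self:
  assumes "\<kappa> < 0" "0 \<le> \<sigma>" "0 < \<Delta>"
  shows "Ehat \<kappa> \<Delta> \<sigma> < \<Delta>"
proof -
  have "bernoulli_cgf (1 - exp (\<kappa> * \<sigma>)) (- \<kappa> * \<Delta>) < - \<kappa> * \<Delta>"
    using assms by (intro bernoulli_cgf_less_self) (auto simp: mult_nonpos_nonneg mult_neg_pos)
  then show ?thesis
    unfolding Ehat_eq_bernoulli_cgf using assms by (subst pos_divide_less_eq) (auto simp: algebra_simps)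
qed

lemma Ehat_gt_neg_penalty:
  assumes "\<kappa> < 0" "0 < \<sigma>"
  shows "- \<sigma> < Ehat \<kappa> \<Delta> \<sigma>"
proof -
  have "ln (1 - (1 - exp (\<kappa> * \<sigma>)))
      < bernoulli_cgf (1 - exp (\<kappa> * \<sigma>)) (- \<kappa> * \<Delta>)"
    using assms by (intro bernoulli_cgf_gt_ln) (auto simp: mult_neg_pos)
  then show ?thesis
    unfolding Ehat_eq_bernoulli_cgf using assms by (subst pos_less_divide_eq) (auto simp: algebra_simps)
qed

lemma Ehat_abs_mono_penalty:
  assumes "\<kappa> < 0" "0 \<le> s" "s \<le> t"
  shows "\<bar>Ehat \<kappa> \<Delta> s\<bar> \<le> \<bar>Ehat \<kappa> \<Delta> t\<bar>"
proof -
  have "\<bar>bernoulli_cgf (1 - exp (\<kappa> * s)) (- \<kappa> * \<Delta>)\<bar>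
      \<le> \<bar>bernoulli_cgf (1 - exp (\<kappa> * t)) (- \<kappa> * \<Delta>)\<bar>"
    using assms by (intro bernoulli_cgf_abs_mono) (auto simp: mult_nonpos_nonneg mult_left_mono_neg)
  then show ?thesis
    unfolding Ehat_eq_bernoulli_cgf using assms by (simp add: divide_right_mono del: divide_minus_right)
qed

theorem theorem3:
  fixes \<kappa> :: real
  assumes "\<kappa> < 0"
  shows "(\<forall>\<sigma>>0.
            Ehat \<kappa> 0 \<sigma> = 0
          \<and> (\<forall>x y. 0 \<le> x \<longrightarrow> x < y \<longrightarrow> \<bar>Ehat \<kappa> x \<sigma>\<bar> < \<bar>Ehat \<kappa> y \<sigma>\<bar>)
          \<and> (\<forall>x y. x < y \<longrightarrow> y \<le> 0 \<longrightarrow> \<bar>Ehat \<kappa> y \<sigma>\<bar> < \<bar>Ehat \<kappa> x \<sigma>\<bar>)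
          \<and> (\<forall>\<Delta>>0. Ehat \<kappa> \<Delta> \<sigma> > 0
                 \<and> 0 < \<bar>\<Delta>\<bar> * (1 - exp (\<kappa> * \<sigma>))
                 \<and> \<bar>\<Delta>\<bar> * (1 - exp (\<kappa> * \<sigma>)) < \<bar>Ehat \<kappa> \<Delta> \<sigma>\<bar>
                 \<and> \<bar>Ehat \<kappa> \<Delta> \<sigma>\<bar> < \<bar>\<Delta>\<bar>)
          \<and> (\<forall>\<Delta><0. Ehat \<kappa> \<Delta> \<sigma> < 0
                 \<and> 0 < \<bar>Ehat \<kappa> \<Delta> \<sigma>\<bar>
                 \<and> \<bar>Ehat \<kappa> \<Delta> \<sigma>\<bar> < min (\<bar>\<Delta>\<bar> * (1 - exp (\<kappa> * \<sigma>))) \<sigma>))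
       \<and> (\<forall>\<Delta>. Ehat \<kappa> \<Delta> 0 = 0
          \<and> (\<forall>s t. 0 \<le> s \<longrightarrow> s \<le> t \<longrightarrow> \<bar>Ehat \<kappa> \<Delta> s\<bar> \<le> \<bar>Ehat \<kappa> \<Delta> t\<bar>))"
proof (intro conjI allI impI)
  fix \<sigma> :: real
  assume "0 < \<sigma>"
  note mono = Ehat_less_mono[OF assms \<open>0 < \<sigma>\<close>]
  have weight: "0 < 1 - exp (\<kappa> * \<sigma>)"
    using assms \<open>0 < \<sigma>\<close> by (simp add: mult_neg_pos)
  show "Ehat \<kappa> 0 \<sigma> = 0"
    by (rule Ehat_zero_left)
  show "\<bar>Ehat \<kappa> x \<sigma>\<bar> < \<bar>Ehat \<kappa> y \<sigma>\<bar>" if "0 \<le> x" "x < y" for x y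
    using that mono[of 0 x] mono[of x y] by (cases "x = 0") (auto simp: Ehat_zero_left)
  show "\<bar>Ehat \<kappa> y \<sigma>\<bar> < \<bar>Ehat \<kappa> x \<sigma>\<bar>" if "x < y" "y \<le> 0" for x y
    using that mono[of y 0] mono[of x y] by (cases "y = 0") (auto simp: Ehat_zero_left)
  fix \<Delta> :: real
  show "0 < Ehat \<kappa> \<Delta> \<sigma>" "0 < \<bar>\<Delta>\<bar> * (1 - exp (\<kappa> * \<sigma>))"
    "\<bar>\<Delta>\<bar> * (1 - exp (\<kappa> * \<sigma>)) < \<bar>Ehat \<kappa> \<Delta> \<sigma>\<bar>" "\<bar>Ehat \<kappa> \<Delta> \<sigma>\<bar> < \<bar>\<Delta>\<bar>"
    if "0 < \<Delta>"
    using that \<open>0 < \<sigma>\<close> weight mono[of 0 \<Delta>] Ehat_gt_weighted_error[OF assms \<open>0 < \<sigma>\<close>, of \<Delta>]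
      Ehat_less_self[OF assms, of \<sigma> \<Delta>] by (auto simp: Ehat_zero_left)
  show "Ehat \<kappa> \<Delta> \<sigma> < 0" "0 < \<bar>Ehat \<kappa> \<Delta> \<sigma>\<bar>"
    "\<bar>Ehat \<kappa> \<Delta> \<sigma>\<bar> < min (\<bar>\<Delta>\<bar> * (1 - exp (\<kappa> * \<sigma>))) \<sigma>"
    if "\<Delta> < 0"
    using that mono[of \<Delta> 0] Ehat_gt_weighted_error[OF assms \<open>0 < \<sigma>\<close>, of \<Delta>]
      Ehat_gt_neg_penalty[OF assms \<open>0 < \<sigma>\<close>, of \<Delta>] by (auto simp: Ehat_zero_left)
next
  fix \<Delta> s t :: real
  show "Ehat \<kappa> \<Delta> 0 = 0"
    by (rule Ehat_zero_right)
  show "\<bar>Ehat \<kappa> \<Delta> s\<bar> \<le> \<bar>Ehat \<kappa> \<Delta> t\<bar>" if "0 \<le> s" "s \<le> t"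
    using Ehat_abs_mono_penalty[OF assms that] .
qed

end
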